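(* Let $A=(a_{ij})_{1\le i,j\le n}$ be a complex Nekrasov matrix. Then there exist real numbers $\epsilon_1,\dots,\epsilon_n$ satisfying $$\epsilon_1>0,\qquad 0<\epsilon_i\le |a_{ii}|-h_i(A)\ \text{ and }\ \epsilon_i>\sum_{j=1}^{i-1}\frac{|a_{ij}|\,\epsilon_j}{|a_{jj}|}\quad\text{for } i=2,\dots,n,$$ and for any such numbers the diagonal matrix $$S=\mathrm{diag}\left(\frac{h_1(A)+\epsilon_1}{|a_{11}|},\dots,\frac{h_n(A)+\epsilon_n}{|a_{nn}|}\right)$$ has positive diagonal entries and $AS$ is strictly diagonally dominant by rows.
   Context: For a complex $n\times n$ matrix $A=(a_{ij})$ with $a_{ii}\ne 0$ for all $i$, define recursively $h_1(A):=\sum_{j\ne 1}|a_{1j}|$ and $h_i(A):=\sum_{j=1}^{i-1}|a_{ij}|\frac{h_j(A)}{|a_{jj}|}+\sum_{j=i+1}^{n}|a_{ij}|$ for $i=2,\dots,n$. $A$ is a Nekrasov matrix if $|a_{ii}|>h_i(A)$ for all $i\in\{1,\dots,n\}$. A matrix $B=(b_{ij})$ is strictly diagonally dominant by rows (SDD) if $|b_{ii}|>\sum_{j\ne i}|b_{ij}|$ for all $i$. *)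

theory Defs
  imports Complex_Main
begin

text \<open>Matrices of size n are represented as functions nat => nat => complex,
  with indices ranging over {1..n} (entries outside are irrelevant).\<close>

function nek_h :: "(nat \<Rightarrow> nat \<Rightarrow> complex) \<Rightarrow> nat \<Rightarrow> nat \<Rightarrow> real" where
  "nek_h A n i =
     (\<Sum>j\<in>{1..<i}. cmod (A i j) * nek_h A n j / cmod (A j j))
     + (\<Sum>j\<in>{i+1..n}. cmod (A i j))"
  by auto
termination
  by (relation "measure (\<lambda>(A, n, i). i)") auto

definition nekrasov :: "(nat \<Rightarrow> nat \<Rightarrow> complex) \<Rightarrow> nat \<Rightarrow> bool" where
  "nekrasov A n \<longleftrightarrow> (\<forall>i\<in>{1..n}. A i i \<noteq> 0) \<and>
     (\<forall>i\<in>{1..n}. cmod (A i i) > nek_h A n i)"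

definition sdd :: "(nat \<Rightarrow> nat \<Rightarrow> complex) \<Rightarrow> nat \<Rightarrow> bool" where
  "sdd B n \<longleftrightarrow> (\<forall>i\<in>{1..n}. cmod (B i i) > (\<Sum>j\<in>{1..n}-{i}. cmod (B i j)))"

definition mat_mult :: "nat \<Rightarrow> (nat \<Rightarrow> nat \<Rightarrow> complex) \<Rightarrow> (nat \<Rightarrow> nat \<Rightarrow> complex) \<Rightarrow> (nat \<Rightarrow> nat \<Rightarrow> complex)" where
  "mat_mult n A B = (\<lambda>i j. \<Sum>k\<in>{1..n}. A i k * B k j)"

definition diag_mat :: "(nat \<Rightarrow> real) \<Rightarrow> (nat \<Rightarrow> nat \<Rightarrow> complex)" where
  "diag_mat d = (\<lambda>i j. if i = j then complex_of_real (d i) else 0)"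

end

theory Submission
  imports Defs
begin

text \<open>For existence take \<open>\<epsilon> = t * w\<close> with weights \<open>w i = 1 + (\<Sum>j<i. |a i j| * w j / |a j j|)\<close>:
  they satisfy the strict recursive inequality with slack 1, and a small enough \<open>t > 0\<close>
  respects the positive margins \<open>|a i i| - h i\<close>. For dominance, row \<open>i\<close> of \<open>A S\<close> has
  diagonal modulus \<open>h i + \<epsilon> i\<close>. Left of the diagonal its entries are the terms of \<open>h i\<close>
  plus the \<open>\<epsilon>\<close>-corrections, whose sum is below \<open>\<epsilon> i\<close>; right of it the scaling
  factors are at most 1 because \<open>\<epsilon> j \<le> |a j j| - h j\<close>.\<close>

declare nek_h.simps[simp del]

lemma nek_h_nonneg: "nek_h A n i \<ge> 0"
proof (induction i rule: less_induct)
  case (less i)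
  have "(\<Sum>j\<in>{1..<i}. cmod (A i j) * nek_h A n j / cmod (A j j)) \<ge> 0"
    by (rule sum_nonneg) (use less in auto)
  moreover have "(\<Sum>j\<in>{i+1..n}. cmod (A i j)) \<ge> 0"
    by (rule sum_nonneg) auto
  ultimately show ?case
    by (subst nek_h.simps) simp
qed

function tri_weight :: "(nat \<Rightarrow> nat \<Rightarrow> real) \<Rightarrow> nat \<Rightarrow> real" where
  "tri_weight c i = 1 + (\<Sum>j\<in>{1..<i}. c i j * tri_weight c j)"
  by auto
termination
  by (relation "measure (\<lambda>(c, i). i)") auto

declare tri_weight.simps[simp del]

lemma tri_weight_ge_1:
  assumes "\<And>i j. 0 \<le> c i j"
  shows "tri_weight c i \<ge> 1"
proof (induction i rule: less_induct)
  case (less i)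
  have "(\<Sum>j\<in>{1..<i}. c i j * tri_weight c j) \<ge> 0"
  proof (rule sum_nonneg)
    fix j assume "j \<in> {1..<i}"
    then have "tri_weight c j \<ge> 1"
      using less by simp
    then show "0 \<le> c i j * tri_weight c j"
      using assms by simp
  qed
  then show ?case
    by (subst tri_weight.simps) simp
qed

lemma lower_triangular_slack_exists:
  fixes c :: "nat \<Rightarrow> nat \<Rightarrow> real" and b :: "nat \<Rightarrow> real"
  assumes c_nonneg: "\<And>i j. 0 \<le> c i j" and b_pos: "\<And>i. i \<in> {1..n} \<Longrightarrow> 0 < b i"
  shows "\<exists>\<epsilon>. (\<forall>i. 0 < \<epsilon> i) \<and>
           (\<forall>i\<in>{1..n}. \<epsilon> i \<le> b i \<and> (\<Sum>j\<in>{1..<i}. c i j * \<epsilon> j) < \<epsilon> i)"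
proof -
  let ?w = "tri_weight c"
  let ?R = "(\<lambda>i. b i / ?w i) ` {1..n} \<union> {1}"
    \<comment> \<open>the element 1 keeps \<open>Min\<close> well defined when \<open>n = 0\<close>\<close>
  define t where "t = Min ?R"
  have w_ge_1: "?w i \<ge> 1" for i
    using tri_weight_ge_1 c_nonneg .
  have w_pos: "0 < ?w i" for i
    using w_ge_1[of i] by simp
  have "0 < r" if "r \<in> ?R" for r
    using that b_pos w_pos by auto
  then have t_pos: "0 < t"
    unfolding t_def by (subst Min_gr_iff) auto
  have t_le: "t \<le> b i / ?w i" if "i \<in> {1..n}" for i
    unfolding t_def using that by (intro Min_le) auto
  show ?thesis
  proof (intro exI[of _ "\<lambda>i. t * ?w i"] conjI allI ballI)
    fix i
    show "0 < t * ?w i"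
      using t_pos w_ge_1[of i] by simp
    assume i: "i \<in> {1..n}"
    have "t * ?w i \<le> b i / ?w i * ?w i"
      using t_le[OF i] w_ge_1[of i] by (intro mult_right_mono) auto
    then show "t * ?w i \<le> b i"
      using w_ge_1[of i] by simp
    have "(\<Sum>j\<in>{1..<i}. c i j * (t * ?w j)) = t * (?w i - 1)"
      by (subst (2) tri_weight.simps) (simp add: sum_distrib_left mult_ac)
    also have "\<dots> < t * ?w i"
      using t_pos by simp
    finally show "(\<Sum>j\<in>{1..<i}. c i j * (t * ?w j)) < t * ?w i" .
  qed
qed

lemma nekrasov_epsilon_exists:
  assumes "nekrasov A n"
  shows "\<exists>\<epsilon>. (\<forall>i. 0 < \<epsilon> i) \<and>
           (\<forall>i\<in>{1..n}. \<epsilon> i \<le> cmod (A i i) - nek_h A n i \<and>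
              (\<Sum>j\<in>{1..<i}. cmod (A i j) * \<epsilon> j / cmod (A j j)) < \<epsilon> i)"
proof -
  have "\<exists>\<epsilon>. (\<forall>i. 0 < \<epsilon> i) \<and> (\<forall>i\<in>{1..n}. \<epsilon> i \<le> cmod (A i i) - nek_h A n i \<and>
           (\<Sum>j\<in>{1..<i}. cmod (A i j) / cmod (A j j) * \<epsilon> j) < \<epsilon> i)"
    using assms unfolding nekrasov_def by (intro lower_triangular_slack_exists) auto
  then show ?thesis
    by (simp add: mult.commute mult.left_commute)
qed

lemma mat_mult_diag_mat:
  "j \<in> {1..n} \<Longrightarrow> mat_mult n A (diag_mat d) i j = A i j * complex_of_real (d j)"
  unfolding mat_mult_def diag_mat_def by (simp add: if_distrib cong: if_cong)

lemma offdiag_row_sum_diag_scaled: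
  assumes i: "i \<in> {1..n}"
    and d_nonneg: "\<And>j. j \<in> {1..n} \<Longrightarrow> 0 \<le> d j"
    and d_le_1: "\<And>j. j \<in> {i+1..n} \<Longrightarrow> d j \<le> 1"
  shows "(\<Sum>j\<in>{1..n}-{i}. cmod (mat_mult n A (diag_mat d) i j))
           \<le> (\<Sum>j\<in>{1..<i}. cmod (A i j) * d j) + (\<Sum>j\<in>{i+1..n}. cmod (A i j))"
proof -
  have "{1..n} - {i} = {1..<i} \<union> {i+1..n}"
    using i by auto
  then have "(\<Sum>j\<in>{1..n}-{i}. cmod (mat_mult n A (diag_mat d) i j))
      = (\<Sum>j\<in>{1..<i} \<union> {i+1..n}. cmod (A i j) * d j)"
    using i d_nonneg by (intro sum.cong) (auto simp: mat_mult_diag_mat norm_mult)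
  also have "\<dots> = (\<Sum>j\<in>{1..<i}. cmod (A i j) * d j) + (\<Sum>j\<in>{i+1..n}. cmod (A i j) * d j)"
    by (rule sum.union_disjoint) auto
  also have "(\<Sum>j\<in>{i+1..n}. cmod (A i j) * d j) \<le> (\<Sum>j\<in>{i+1..n}. cmod (A i j))"
    using d_le_1 by (intro sum_mono) (auto intro: mult_left_le)
  finally show ?thesis
    by simp
qed

lemma nekrasov_scaling_sdd:
  assumes A: "nekrasov A n"
    and \<epsilon>_pos: "\<And>i. i \<in> {1..n} \<Longrightarrow> 0 < \<epsilon> i"
    and \<epsilon>_le: "\<And>i. i \<in> {2..n} \<Longrightarrow> \<epsilon> i \<le> cmod (A i i) - nek_h A n i"
    and \<epsilon>_gt: "\<And>i. i \<in> {1..n} \<Longrightarrow> (\<Sum>j\<in>{1..<i}. cmod (A i j) * \<epsilon> j / cmod (A j j)) < \<epsilon> i"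
  defines "S \<equiv> \<lambda>i. (nek_h A n i + \<epsilon> i) / cmod (A i i)"
  shows "(\<forall>i\<in>{1..n}. 0 < S i) \<and> sdd (mat_mult n A (diag_mat S)) n"
proof -
  have nz: "A i i \<noteq> 0" if "i \<in> {1..n}" for i
    using A that unfolding nekrasov_def by auto
  have S_pos: "0 < S i" if "i \<in> {1..n}" for i
    unfolding S_def using \<epsilon>_pos[OF that] nek_h_nonneg[of A n i] nz[OF that] by simp
  have "cmod (mat_mult n A (diag_mat S) i i)
          > (\<Sum>j\<in>{1..n}-{i}. cmod (mat_mult n A (diag_mat S) i j))" if i: "i \<in> {1..n}" for i
  proof -
    have S_le_1: "S j \<le> 1" if "j \<in> {i+1..n}" for j
      using \<epsilon>_le[of j] nz[of j] that i unfolding S_def by (simp add: divide_le_eq_1)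
    have "(\<Sum>j\<in>{1..n}-{i}. cmod (mat_mult n A (diag_mat S) i j))
        \<le> (\<Sum>j\<in>{1..<i}. cmod (A i j) * S j) + (\<Sum>j\<in>{i+1..n}. cmod (A i j))"
      using i S_pos S_le_1 by (intro offdiag_row_sum_diag_scaled) (auto intro: less_imp_le)
    also have "(\<Sum>j\<in>{1..<i}. cmod (A i j) * S j)
        = (\<Sum>j\<in>{1..<i}. cmod (A i j) * nek_h A n j / cmod (A j j))
          + (\<Sum>j\<in>{1..<i}. cmod (A i j) * \<epsilon> j / cmod (A j j))"
      unfolding S_def sum.distrib[symmetric]
      by (intro sum.cong) (auto simp: add_divide_distrib distrib_left)
    also have "\<dots> + (\<Sum>j\<in>{i+1..n}. cmod (A i j))
        = nek_h A n i + (\<Sum>j\<in>{1..<i}. cmod (A i j) * \<epsilon> j / cmod (A j j))"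
      by (subst (2) nek_h.simps) simp
    also have "\<dots> < nek_h A n i + \<epsilon> i"
      using \<epsilon>_gt[OF i] by simp
    also have "\<dots> = cmod (A i i) * S i"
      using nz[OF i] unfolding S_def by simp
    also have "\<dots> = cmod (mat_mult n A (diag_mat S) i i)"
      using i S_pos[OF i] by (simp add: mat_mult_diag_mat norm_mult)
    finally show ?thesis .
  qed
  then show ?thesis
    using S_pos unfolding sdd_def by auto
qed

theorem theorem2p1:
  fixes A :: "nat \<Rightarrow> nat \<Rightarrow> complex" and n :: nat
  assumes "nekrasov A n"
  shows "(\<exists>\<epsilon> :: nat \<Rightarrow> real. \<epsilon> 1 > 0 \<and>
            (\<forall>i\<in>{2..n}. 0 < \<epsilon> i \<and> \<epsilon> i \<le> cmod (A i i) - nek_h A n i \<and>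
               \<epsilon> i > (\<Sum>j\<in>{1..<i}. cmod (A i j) * \<epsilon> j / cmod (A j j))))
       \<and> (\<forall>\<epsilon> :: nat \<Rightarrow> real. \<epsilon> 1 > 0 \<and>
            (\<forall>i\<in>{2..n}. 0 < \<epsilon> i \<and> \<epsilon> i \<le> cmod (A i i) - nek_h A n i \<and>
               \<epsilon> i > (\<Sum>j\<in>{1..<i}. cmod (A i j) * \<epsilon> j / cmod (A j j)))
          \<longrightarrow> (let S = (\<lambda>i. (nek_h A n i + \<epsilon> i) / cmod (A i i)) in
               (\<forall>i\<in>{1..n}. S i > 0) \<and> sdd (mat_mult n A (diag_mat S)) n))"
proof (intro conjI allI impI)
  show "\<exists>\<epsilon> :: nat \<Rightarrow> real. \<epsilon> 1 > 0 \<and>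
            (\<forall>i\<in>{2..n}. 0 < \<epsilon> i \<and> \<epsilon> i \<le> cmod (A i i) - nek_h A n i \<and>
               \<epsilon> i > (\<Sum>j\<in>{1..<i}. cmod (A i j) * \<epsilon> j / cmod (A j j)))"
    using nekrasov_epsilon_exists[OF assms] by fastforce
next
  fix \<epsilon> :: "nat \<Rightarrow> real"
  assume \<epsilon>: "\<epsilon> 1 > 0 \<and>
            (\<forall>i\<in>{2..n}. 0 < \<epsilon> i \<and> \<epsilon> i \<le> cmod (A i i) - nek_h A n i \<and>
               \<epsilon> i > (\<Sum>j\<in>{1..<i}. cmod (A i j) * \<epsilon> j / cmod (A j j)))"
  have "0 < \<epsilon> i \<and> (\<Sum>j\<in>{1..<i}. cmod (A i j) * \<epsilon> j / cmod (A j j)) < \<epsilon> i"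
    if "i \<in> {1..n}" for i
    using \<epsilon> that by (cases "i = 1") auto
  then show "let S = (\<lambda>i. (nek_h A n i + \<epsilon> i) / cmod (A i i)) in
               (\<forall>i\<in>{1..n}. S i > 0) \<and> sdd (mat_mult n A (diag_mat S)) n"
    unfolding Let_def using \<epsilon> by (intro nekrasov_scaling_sdd[OF assms]) auto
qed

end
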